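(* Let $\mathcal{O}\subset\mathbb{R}^n$ be nonempty and open, and let $\varrho\colon\mathcal{O}\to(0,+\infty]$ be a lower semicontinuous function. Then $\mathcal{O}$ is the union of closed balls with radius function $\varrho(\cdot)$ if and only if for every $x\in\mathcal{O}$ there exists a unit vector $\zeta_x\in\mathbb{R}^n$ satisfying: (i) if $\varrho(x)<+\infty$, then there exists $t_x\in[0,\varrho(x)]$ such that $$\langle y-x+t_x\zeta_x,\; y-x+(t_x-2\varrho(x))\zeta_x\rangle>0\quad\text{for all } y\in\mathcal{O}^c;$$ (ii) if $\varrho(x)=+\infty$, then $\langle \zeta_x, y-x\rangle\le 0$ for all $y\in\mathcal{O}^c$.
   Context: $\mathcal{O}^c$ denotes the complement of $\mathcal{O}$ in $\mathbb{R}^n$, $\langle\cdot,\cdot\rangle$ the usual inner product, and $\bar B(z;\delta)$ the closed ball of center $z$ and radius $\delta$. For a nonempty open set $\mathcal{O}\subset\mathbb{R}^n$ and a lower semicontinuous $\varrho\colon\mathcal{O}\to(0,+\infty]$, $\mathcal{O}$ is said to be the union of closed balls with radius function $\varrho(\cdot)$ if for every $x\in\mathcal{O}$ there exists $y_x\in\mathcal{O}$ such that: $x\in\bar B(y_x;\varrho(x))\subset\mathcal{O}$ if $\varrho(x)<+\infty$; and $x\in\bar B(x+\delta(y_x-x);\delta)\subset\mathcal{O}$ for all $\delta>0$ if $\varrho(x)=+\infty$. *)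

theory Defs
  imports "HOL-Analysis.Analysis"
begin

definition lsc_on :: "'a::topological_space set \<Rightarrow> ('a \<Rightarrow> ereal) \<Rightarrow> bool" where
  "lsc_on U \<rho> \<longleftrightarrow> (\<forall>x\<in>U. \<forall>c. c < \<rho> x \<longrightarrow> (\<forall>\<^sub>F y in at x within U. c < \<rho> y))"

definition union_closed_balls :: "'a::euclidean_space set \<Rightarrow> ('a \<Rightarrow> ereal) \<Rightarrow> bool" where
  "union_closed_balls U \<rho> \<longleftrightarrow>
    (\<forall>x\<in>U. \<exists>y\<in>U.
       (\<rho> x < \<infinity> \<longrightarrow> x \<in> cball y (real_of_ereal (\<rho> x)) \<and> cball y (real_of_ereal (\<rho> x)) \<subseteq> U) \<and>
       (\<rho> x = \<infinity> \<longrightarrow> (\<forall>\<delta>>0. x \<in> cball (x + \<delta> *\<^sub>R (y - x)) \<delta> \<and> cball (x + \<delta> *\<^sub>R (y - x)) \<delta> \<subseteq> U)))"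

end

(*
  For a unit vector z the inner product <y - x + t z, y - x + (t - 2r) z> equals
  |y - (x + (r - t) z)|^2 - r^2, so condition (i) says that the closed ball of radius r
  centred at x + (r - t) z misses the complement of U; as z and t in [0, r] vary, these
  are exactly the balls of radius r containing x.  For r = \<infinity>, the balls of radius d
  centred at x + d z, d > 0, exhaust x together with the open half-space
  <z, y - x> > 0, so condition (ii) says that all of them lie in U.
*)
theory Submission
  imports Defs
begin

lemma mem_cball_iff_polar:
  fixes x c :: "'a::{real_normed_vector, perfect_space}"
  shows "x \<in> cball c r \<longleftrightarrow> (\<exists>\<zeta> s. norm \<zeta> = 1 \<and> 0 \<le> s \<and> s \<le> r \<and> c = x + s *\<^sub>R \<zeta>)"
proof
  assume x: "x \<in> cball c r"
  show "\<exists>\<zeta> s. norm \<zeta> = 1 \<and> 0 \<le> s \<and> s \<le> r \<and> c = x + s *\<^sub>R \<zeta>"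
  proof (cases "c = x")
    case True
    obtain \<zeta> :: 'a where "norm \<zeta> = 1" using vector_choose_size zero_le_one by blast
    with True x show ?thesis by (intro exI[of _ \<zeta>] exI[of _ 0]) auto
  next
    case False
    with x show ?thesis
      by (intro exI[of _ "sgn (c - x)"] exI[of _ "norm (c - x)"])
         (auto simp: norm_sgn sgn_div_norm dist_norm norm_minus_commute)
  qed
qed (auto simp: dist_norm)

lemma inner_shifted_eq_norm_sq:
  fixes w \<zeta> :: "'a::real_inner"
  assumes "norm \<zeta> = 1"
  shows "inner (w + t *\<^sub>R \<zeta>) (w + (t - 2 * r) *\<^sub>R \<zeta>) = (norm (w + (t - r) *\<^sub>R \<zeta>))\<^sup>2 - r\<^sup>2"
proof -
  have "inner \<zeta> \<zeta> = 1" using assms by (simp add: norm_eq_1)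
  then show ?thesis
    unfolding power2_norm_eq_inner
    by (simp add: inner_commute algebra_simps power2_eq_square)
qed

lemma inner_shifted_pos_iff_notin_cball:
  fixes x y \<zeta> :: "'a::real_inner"
  assumes "norm \<zeta> = 1" and "0 \<le> r"
  shows "inner (y - x + t *\<^sub>R \<zeta>) (y - x + (t - 2 * r) *\<^sub>R \<zeta>) > 0
    \<longleftrightarrow> y \<notin> cball (x + (r - t) *\<^sub>R \<zeta>) r"
proof -
  have "y - x + (t - r) *\<^sub>R \<zeta> = y - (x + (r - t) *\<^sub>R \<zeta>)"
    by (simp add: algebra_simps)
  then have "norm (y - x + (t - r) *\<^sub>R \<zeta>) = dist (x + (r - t) *\<^sub>R \<zeta>) y"
    by (simp only: dist_norm norm_minus_commute)
  then have "inner (y - x + t *\<^sub>R \<zeta>) (y - x + (t - 2 * r) *\<^sub>R \<zeta>)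
      = (dist (x + (r - t) *\<^sub>R \<zeta>) y)\<^sup>2 - r\<^sup>2"
    using inner_shifted_eq_norm_sq[OF assms(1), of "y - x" t r] by simp
  moreover have "dist (x + (r - t) *\<^sub>R \<zeta>) y \<le> r \<longleftrightarrow> (dist (x + (r - t) *\<^sub>R \<zeta>) y)\<^sup>2 \<le> r\<^sup>2"
    using assms(2) by simp
  ultimately show ?thesis
    by (simp add: not_le)
qed

lemma ball_through_point_subset_iff:
  fixes U :: "'a::{real_inner, perfect_space} set"
  shows "(\<exists>c\<in>U. x \<in> cball c r \<and> cball c r \<subseteq> U) \<longleftrightarrow>
    (\<exists>\<zeta>. norm \<zeta> = 1 \<and> (\<exists>t. 0 \<le> t \<and> t \<le> r \<and>
       (\<forall>y. y \<notin> U \<longrightarrow> inner (y - x + t *\<^sub>R \<zeta>) (y - x + (t - 2 * r) *\<^sub>R \<zeta>) > 0)))"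
    (is "?balls \<longleftrightarrow> ?inner")
proof -
  have "?balls \<longleftrightarrow> (\<exists>c. x \<in> cball c r \<and> cball c r \<subseteq> U)"
  proof -
    have "c \<in> U" if "x \<in> cball c r" "cball c r \<subseteq> U" for c
      using that by (meson centre_in_cball mem_cball order_trans subsetD zero_le_dist)
    then show ?thesis by blast
  qed
  also have "\<dots> \<longleftrightarrow> (\<exists>\<zeta> s. norm \<zeta> = 1 \<and> 0 \<le> s \<and> s \<le> r \<and> cball (x + s *\<^sub>R \<zeta>) r \<subseteq> U)"
    unfolding mem_cball_iff_polar by blast
  also have "\<dots> \<longleftrightarrow> (\<exists>\<zeta> t. norm \<zeta> = 1 \<and> 0 \<le> t \<and> t \<le> r \<and> cball (x + (r - t) *\<^sub>R \<zeta>) r \<subseteq> U)"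
  proof
    assume "\<exists>\<zeta> s. norm \<zeta> = 1 \<and> 0 \<le> s \<and> s \<le> r \<and> cball (x + s *\<^sub>R \<zeta>) r \<subseteq> U"
    then obtain \<zeta> s where "norm \<zeta> = 1" "0 \<le> s" "s \<le> r" "cball (x + s *\<^sub>R \<zeta>) r \<subseteq> U"
      by blast
    then show "\<exists>\<zeta> t. norm \<zeta> = 1 \<and> 0 \<le> t \<and> t \<le> r \<and> cball (x + (r - t) *\<^sub>R \<zeta>) r \<subseteq> U"
      by (intro exI[of _ \<zeta>] exI[of _ "r - s"]) auto
  next
    assume "\<exists>\<zeta> t. norm \<zeta> = 1 \<and> 0 \<le> t \<and> t \<le> r \<and> cball (x + (r - t) *\<^sub>R \<zeta>) r \<subseteq> U"
    then obtain \<zeta> t where "norm \<zeta> = 1" "0 \<le> t" "t \<le> r" "cball (x + (r - t) *\<^sub>R \<zeta>) r \<subseteq> U"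
      by blast
    then show "\<exists>\<zeta> s. norm \<zeta> = 1 \<and> 0 \<le> s \<and> s \<le> r \<and> cball (x + s *\<^sub>R \<zeta>) r \<subseteq> U"
      by (intro exI[of _ \<zeta>] exI[of _ "r - t"]) auto
  qed
  also have "\<dots> \<longleftrightarrow> ?inner"
  proof -
    have "cball (x + (r - t) *\<^sub>R \<zeta>) r \<subseteq> U \<longleftrightarrow>
        (\<forall>y. y \<notin> U \<longrightarrow> inner (y - x + t *\<^sub>R \<zeta>) (y - x + (t - 2 * r) *\<^sub>R \<zeta>) > 0)"
      if "norm \<zeta> = 1" "0 \<le> t" "t \<le> r" for \<zeta> t
      using inner_shifted_pos_iff_notin_cball[OF that(1), of r] that by auto
    then show ?thesis by blast
  qed
  finally show ?thesis .
qed

lemma dist_tangent_centre_le_iff: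
  fixes x z \<zeta> :: "'a::real_inner"
  assumes "norm \<zeta> = 1" and "0 \<le> d"
  shows "dist (x + d *\<^sub>R \<zeta>) z \<le> d \<longleftrightarrow> (norm (z - x))\<^sup>2 \<le> 2 * d * inner \<zeta> (z - x)"
proof -
  have "(dist (x + d *\<^sub>R \<zeta>) z)\<^sup>2 = (norm (z - x))\<^sup>2 - 2 * d * inner \<zeta> (z - x) + d\<^sup>2"
    using assms(1) unfolding dist_norm power2_norm_eq_inner
    by (simp add: inner_commute algebra_simps power2_eq_square norm_eq_1)
  moreover have "dist (x + d *\<^sub>R \<zeta>) z \<le> d \<longleftrightarrow> (dist (x + d *\<^sub>R \<zeta>) z)\<^sup>2 \<le> d\<^sup>2"
    using assms(2) by (simp add: power2_le_iff_abs_le)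
  ultimately show ?thesis by linarith
qed

lemma mem_tangent_cball_iff:
  fixes x z \<zeta> :: "'a::real_inner"
  assumes \<zeta>: "norm \<zeta> = 1"
  shows "(\<exists>d>0. z \<in> cball (x + d *\<^sub>R \<zeta>) d) \<longleftrightarrow> z = x \<or> inner \<zeta> (z - x) > 0"
proof
  assume "\<exists>d>0. z \<in> cball (x + d *\<^sub>R \<zeta>) d"
  then obtain d where "d > 0" "dist (x + d *\<^sub>R \<zeta>) z \<le> d"
    by auto
  then have "(norm (z - x))\<^sup>2 \<le> 2 * d * inner \<zeta> (z - x)"
    using dist_tangent_centre_le_iff[OF \<zeta>, of d] by simp
  moreover have "(norm (z - x))\<^sup>2 > 0" if "z \<noteq> x"
    using that by simp
  ultimately show "z = x \<or> inner \<zeta> (z - x) > 0"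
    using \<open>d > 0\<close> by (metis less_le_trans mult_pos_pos zero_less_mult_pos zero_less_numeral)
next
  assume "z = x \<or> inner \<zeta> (z - x) > 0"
  then show "\<exists>d>0. z \<in> cball (x + d *\<^sub>R \<zeta>) d"
  proof
    assume "z = x"
    with \<zeta> show ?thesis by (intro exI[of _ 1]) (simp add: dist_norm)
  next
    assume pos: "inner \<zeta> (z - x) > 0"
    \<comment> \<open>the radius for which z lies on the boundary sphere\<close>
    define d where "d = (norm (z - x))\<^sup>2 / (2 * inner \<zeta> (z - x))"
    have "d > 0"
      using pos by (auto simp: d_def intro!: divide_pos_pos)
    moreover have "(norm (z - x))\<^sup>2 = 2 * d * inner \<zeta> (z - x)"
      using pos by (simp add: d_def)
    ultimately show ?thesis
      using dist_tangent_centre_le_iff[OF \<zeta>] by auto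
  qed
qed

lemma tangent_cballs_subset_iff:
  fixes U :: "'a::real_inner set"
  assumes \<zeta>: "norm \<zeta> = 1" and "x \<in> U"
  shows "(\<forall>d>0. cball (x + d *\<^sub>R \<zeta>) d \<subseteq> U) \<longleftrightarrow> (\<forall>y. y \<notin> U \<longrightarrow> inner \<zeta> (y - x) \<le> 0)"
proof
  assume balls: "\<forall>d>0. cball (x + d *\<^sub>R \<zeta>) d \<subseteq> U"
  show "\<forall>y. y \<notin> U \<longrightarrow> inner \<zeta> (y - x) \<le> 0"
  proof (intro allI impI)
    fix y assume "y \<notin> U"
    with balls have "\<not> (\<exists>d>0. y \<in> cball (x + d *\<^sub>R \<zeta>) d)"
      by blast
    then show "inner \<zeta> (y - x) \<le> 0"
      unfolding mem_tangent_cball_iff[OF \<zeta>] by simp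
  qed
next
  assume outside: "\<forall>y. y \<notin> U \<longrightarrow> inner \<zeta> (y - x) \<le> 0"
  show "\<forall>d>0. cball (x + d *\<^sub>R \<zeta>) d \<subseteq> U"
  proof (intro allI impI subsetI)
    fix d z assume "d > 0" "z \<in> cball (x + d *\<^sub>R \<zeta>) d"
    then have "z = x \<or> inner \<zeta> (z - x) > 0"
      using mem_tangent_cball_iff[OF \<zeta>] by blast
    then show "z \<in> U"
      using outside \<open>x \<in> U\<close> by force
  qed
qed

lemma cball_sgn_subset_cball:
  fixes v :: "'a::real_normed_vector"
  assumes "v \<noteq> 0" and "norm v \<le> 1" and "0 \<le> d"
  shows "cball (x + d *\<^sub>R sgn v) d \<subseteq> cball (x + (d / norm v) *\<^sub>R v) (d / norm v)"
proof -
  have "d *\<^sub>R sgn v = (d / norm v) *\<^sub>R v"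
    by (simp add: sgn_div_norm divide_inverse_commute)
  moreover have "d \<le> d / norm v"
    using assms by (simp add: le_divide_eq mult_left_le)
  ultimately show ?thesis
    by (simp add: subset_cball)
qed

lemma tangent_balls_towards_point_subset_iff:
  fixes U :: "'a::{real_inner, perfect_space} set"
  assumes "x \<in> U"
  shows "(\<exists>y\<in>U. \<forall>d>0. x \<in> cball (x + d *\<^sub>R (y - x)) d \<and> cball (x + d *\<^sub>R (y - x)) d \<subseteq> U)
    \<longleftrightarrow> (\<exists>\<zeta>. norm \<zeta> = 1 \<and> (\<forall>y. y \<notin> U \<longrightarrow> inner \<zeta> (y - x) \<le> 0))"
proof
  assume "\<exists>y\<in>U. \<forall>d>0. x \<in> cball (x + d *\<^sub>R (y - x)) d \<and> cball (x + d *\<^sub>R (y - x)) d \<subseteq> U"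
  then obtain v where v: "\<And>d. d > 0 \<Longrightarrow> x \<in> cball (x + d *\<^sub>R v) d \<and> cball (x + d *\<^sub>R v) d \<subseteq> U"
    by blast
  show "\<exists>\<zeta>. norm \<zeta> = 1 \<and> (\<forall>y. y \<notin> U \<longrightarrow> inner \<zeta> (y - x) \<le> 0)"
  proof (cases "v = 0")
    case True
    have "z \<in> U" for z
    proof -
      have "0 < dist x z + 1"
        using zero_le_dist[of x z] by linarith
      then have "cball x (dist x z + 1) \<subseteq> U"
        using v True by simp
      moreover have "z \<in> cball x (dist x z + 1)"
        by simp
      ultimately show ?thesis by blast
    qed
    moreover obtain \<zeta> :: 'a where "norm \<zeta> = 1"
      using vector_choose_size zero_le_one by blast
    ultimately show ?thesis by blast
  next
    case False
    have "norm v \<le> 1"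
      using v[of 1] by (simp add: dist_norm)
    have "cball (x + d *\<^sub>R sgn v) d \<subseteq> U" if "d > 0" for d
      using cball_sgn_subset_cball[OF False \<open>norm v \<le> 1\<close>, of d x] v[of "d / norm v"] False that
      by auto
    then have "\<forall>y. y \<notin> U \<longrightarrow> inner (sgn v) (y - x) \<le> 0"
      using tangent_cballs_subset_iff[of "sgn v" x U] False \<open>x \<in> U\<close> by (auto simp: norm_sgn)
    with False show ?thesis
      by (intro exI[of _ "sgn v"]) (simp add: norm_sgn)
  qed
next
  assume "\<exists>\<zeta>. norm \<zeta> = 1 \<and> (\<forall>y. y \<notin> U \<longrightarrow> inner \<zeta> (y - x) \<le> 0)"
  then obtain \<zeta> :: 'a where \<zeta>: "norm \<zeta> = 1" and "\<forall>y. y \<notin> U \<longrightarrow> inner \<zeta> (y - x) \<le> 0"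
    by blast
  then have balls: "cball (x + d *\<^sub>R \<zeta>) d \<subseteq> U" if "d > 0" for d
    using tangent_cballs_subset_iff[OF \<zeta> assms] that by blast
  show "\<exists>y\<in>U. \<forall>d>0. x \<in> cball (x + d *\<^sub>R (y - x)) d \<and> cball (x + d *\<^sub>R (y - x)) d \<subseteq> U"
  proof (intro bexI[of _ "x + \<zeta>"] allI impI conjI)
    show "x + \<zeta> \<in> U"
      using balls[of 1] \<zeta> by (auto simp: dist_norm)
  qed (use balls \<zeta> in \<open>auto simp: dist_norm\<close>)
qed

theorem proposition1:
  fixes U :: "'a::euclidean_space set" and \<rho> :: "'a \<Rightarrow> ereal"
  assumes "open U" and "U \<noteq> {}"
    and "\<forall>x\<in>U. \<rho> x > 0"
    and "lsc_on U \<rho>"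
  shows "union_closed_balls U \<rho> \<longleftrightarrow>
    (\<forall>x\<in>U. \<exists>\<zeta>::'a. norm \<zeta> = 1 \<and>
       (\<rho> x < \<infinity> \<longrightarrow>
          (\<exists>t. 0 \<le> t \<and> t \<le> real_of_ereal (\<rho> x) \<and>
             (\<forall>y. y \<notin> U \<longrightarrow>
                inner (y - x + t *\<^sub>R \<zeta>) (y - x + (t - 2 * real_of_ereal (\<rho> x)) *\<^sub>R \<zeta>) > 0))) \<and>
       (\<rho> x = \<infinity> \<longrightarrow> (\<forall>y. y \<notin> U \<longrightarrow> inner \<zeta> (y - x) \<le> 0)))"
  unfolding union_closed_balls_def
proof (intro ball_cong refl, goal_cases)
  case (1 x)
  show ?case
  proof (cases "\<rho> x = \<infinity>")
    case True
    then show ?thesis using tangent_balls_towards_point_subset_iff[OF \<open>x \<in> U\<close>] by simp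
  next
    case False
    then show ?thesis
      using ball_through_point_subset_iff[of U x "real_of_ereal (\<rho> x)"] by (simp add: less_le)
  qed
qed

end
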